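(* For any sequence of groups $(G_n)_{n\in\mathbb N}$, the archipelago group $\mathcal A(G_n)$ has no infinite cyclic quotient; equivalently, $\mathrm{Hom}(\mathcal A(G_n),\mathbb Z)$ is trivial.
   Context: For a sequence of groups $(G_n)_{n\in\mathbb N}$, an infinite word is a map $w:L\to\bigsqcup_n (G_n\setminus\{1\})$ from a countable linearly ordered set $L$ such that $w^{-1}(G_n)$ is finite for every $n$. Two infinite words are equivalent if for every $m$ their restrictions to the letters from $G_1,\dots,G_m$ represent the same element of $G_1*\cdots*G_m$. The topologist's product $\circledast_n G_n$ is the group of equivalence classes, with multiplication induced by concatenation and inversion by reversing the order and inverting each letter. The free product $*_n G_n$ is the subgroup of classes of finite words. The archipelago group is $\mathcal A(G_n):=\circledast_n G_n/\langle\langle *_n G_n\rangle\rangle$ (quotient by the normal closure). *)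

theory Defs
  imports "HOL-Algebra.Algebra"
begin

text \<open>An infinite word over a countable linear order L is represented as a partial map
  from the rationals (every countable linear order embeds into Q) to letters;
  its domain is L.\<close>

type_synonym 'a letter = "nat \<times> 'a"
type_synonym 'a word = "rat \<Rightarrow> 'a letter option"

definition is_word :: "(nat \<Rightarrow> 'a monoid) \<Rightarrow> 'a word \<Rightarrow> bool" where
  "is_word G w \<longleftrightarrow>
     (\<forall>q n g. w q = Some (n, g) \<longrightarrow> g \<in> carrier (G n) \<and> g \<noteq> \<one>\<^bsub>G n\<^esub>) \<and>
     (\<forall>n. finite {q. \<exists>g. w q = Some (n, g)})"

definition restr :: "'a word \<Rightarrow> nat \<Rightarrow> 'a letter list" where
  "restr w m = map (\<lambda>q. the (w q))
      (sorted_list_of_set {q. \<exists>n g. w q = Some (n, g) \<and> n < m})"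

text \<open>Free product of the G_n: finite words modulo the elementary moves
  (merging two adjacent letters of the same group, deleting an identity letter).\<close>
inductive fp_step :: "(nat \<Rightarrow> 'a monoid) \<Rightarrow> 'a letter list \<Rightarrow> 'a letter list \<Rightarrow> bool"
  for G where
  merge: "a \<in> carrier (G n) \<Longrightarrow> b \<in> carrier (G n) \<Longrightarrow>
     fp_step G (xs @ [(n, a), (n, b)] @ ys) (xs @ [(n, a \<otimes>\<^bsub>G n\<^esub> b)] @ ys)"
| delete: "fp_step G (xs @ [(n, \<one>\<^bsub>G n\<^esub>)] @ ys) (xs @ ys)"

definition fp_eq :: "(nat \<Rightarrow> 'a monoid) \<Rightarrow> 'a letter list \<Rightarrow> 'a letter list \<Rightarrow> bool" where
  "fp_eq G = equivclp (fp_step G)"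

definition word_eq :: "(nat \<Rightarrow> 'a monoid) \<Rightarrow> 'a word \<Rightarrow> 'a word \<Rightarrow> bool" where
  "word_eq G w v \<longleftrightarrow> (\<forall>m. fp_eq G (restr w m) (restr v m))"

text \<open>Order isomorphism Q \<rightarrow> Q \<inter> (-1,1) and its inverse, used for concatenation.\<close>
definition squash_inv :: "rat \<Rightarrow> rat" where
  "squash_inv y = y / (1 - \<bar>y\<bar>)"

definition word_concat :: "'a word \<Rightarrow> 'a word \<Rightarrow> 'a word" where
  "word_concat w v p =
     (if -2 < p \<and> p < 0 then w (squash_inv (p + 1))
      else if 0 < p \<and> p < 2 then v (squash_inv (p - 1))
      else None)"

definition word_class :: "(nat \<Rightarrow> 'a monoid) \<Rightarrow> 'a word \<Rightarrow> 'a word set" where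
  "word_class G w = {v. is_word G v \<and> word_eq G v w}"

definition tp_mult :: "(nat \<Rightarrow> 'a monoid) \<Rightarrow> 'a word set \<Rightarrow> 'a word set \<Rightarrow> 'a word set" where
  "tp_mult G A B = {u. is_word G u \<and> (\<exists>x\<in>A. \<exists>y\<in>B. word_eq G u (word_concat x y))}"

definition topologists_product :: "(nat \<Rightarrow> 'a monoid) \<Rightarrow> 'a word set monoid" where
  "topologists_product G =
     \<lparr> carrier = {word_class G w | w. is_word G w},
       monoid.mult = tp_mult G,
       one = word_class G (\<lambda>_. None) \<rparr>"

definition free_product_sub :: "(nat \<Rightarrow> 'a monoid) \<Rightarrow> 'a word set set" where
  "free_product_sub G = {word_class G w | w. is_word G w \<and> finite (dom w)}"

definition normal_closure :: "('b, 'c) monoid_scheme \<Rightarrow> 'b set \<Rightarrow> 'b set" where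
  "normal_closure H S =
     generate H (\<Union>x\<in>carrier H. \<Union>s\<in>S. {x \<otimes>\<^bsub>H\<^esub> s \<otimes>\<^bsub>H\<^esub> inv\<^bsub>H\<^esub> x})"

definition archipelago :: "(nat \<Rightarrow> 'a monoid) \<Rightarrow> 'a word set set monoid" where
  "archipelago G = topologists_product G Mod
                     normal_closure (topologists_product G) (free_product_sub G)"

end

theory Submission
  imports Defs
begin

text \<open>A homomorphism from the archipelago group to the integers lifts to a homomorphism f on
  the topologist's product that vanishes on the free product, and an infinite cyclic quotient
  would yield a nonzero one. Deleting a letter from a word w does not change f, because w splits
  as a product around that letter and the middle factor lies in the free product. So for every k
  the word W k obtained by deleting the finitely many letters of w from G 0, ..., G (k - 1) has
  f (W k) = f w = c. As W k only uses the groups G k, G (k + 1), ..., the nested infinite words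
  z k = W k (z (k + 1))^B exist for every B, and f (z k) = c + B * f (z (k + 1)) for all k.
  For B = |c| + 2 this recurrence has no integral solution unless c = 0.\<close>

section \<open>Concatenation of words\<close>

definition squash :: "rat \<Rightarrow> rat" where
  "squash x = x / (1 + \<bar>x\<bar>)"

lemma abs_squash_less: "\<bar>squash x\<bar> < 1"
  by (simp add: squash_def)

lemma squash_inv_squash: "squash_inv (squash x) = x"
  by (cases "0 \<le> x") (auto simp: squash_def squash_inv_def field_simps)

lemma squash_squash_inv: "\<bar>y\<bar> < 1 \<Longrightarrow> squash (squash_inv y) = y"
  by (cases "0 \<le> y") (auto simp: squash_def squash_inv_def field_simps)

lemma strict_mono_squash: "strict_mono squash"
proof (rule strict_monoI)
  fix x y :: rat assume "x < y"
  then consider "0 \<le> x" | "x < 0" "0 \<le> y" | "y < 0" by linarith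
  then show "squash x < squash y"
  proof cases
    case 2
    then have "squash x < 0" "0 \<le> squash y" by (simp_all add: squash_def divide_neg_pos)
    then show ?thesis by linarith
  qed (use \<open>x < y\<close> in \<open>auto simp: squash_def field_simps\<close>)
qed

lemma word_concat_left: "word_concat w v (squash q - 1) = w q"
proof -
  have "-2 < squash q - 1 \<and> squash q - 1 < 0"
    using abs_squash_less[of q] by (simp add: abs_less_iff)
  then show ?thesis by (simp add: word_concat_def squash_inv_squash)
qed

lemma word_concat_right: "word_concat w v (squash q + 1) = v q"
proof -
  have "\<not> (-2 < squash q + 1 \<and> squash q + 1 < 0)" "0 < squash q + 1 \<and> squash q + 1 < 2"
    using abs_squash_less[of q] by (simp_all add: abs_less_iff)
  then show ?thesis by (simp add: word_concat_def squash_inv_squash)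
qed

lemma word_concat_SomeE:
  assumes "word_concat w v p = Some x"
  obtains q where "p = squash q - 1" "w q = Some x" | q where "p = squash q + 1" "v q = Some x"
proof (cases "-2 < p \<and> p < 0")
  case True
  then have "p = squash (squash_inv (p + 1)) - 1" by (simp add: squash_squash_inv abs_less_iff)
  with True assms show ?thesis by (intro that(1)) (auto simp: word_concat_def)
next
  case False
  with assms have p: "0 < p \<and> p < 2" by (auto simp: word_concat_def split: if_splits)
  then have "p = squash (squash_inv (p - 1)) + 1" by (simp add: squash_squash_inv abs_less_iff)
  with False p assms show ?thesis by (intro that(2)) (auto simp: word_concat_def)
qed

lemma is_word_empty: "is_word G (\<lambda>_. None)"
  by (simp add: is_word_def)

lemma is_word_concat:
  assumes w: "is_word G w" and v: "is_word G v"
  shows "is_word G (word_concat w v)"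
  unfolding is_word_def
proof (rule conjI; intro allI impI)
  fix q n g assume "word_concat w v q = Some (n, g)"
  then show "g \<in> carrier (G n) \<and> g \<noteq> \<one>\<^bsub>G n\<^esub>"
    by (rule word_concat_SomeE) (use w v in \<open>auto simp: is_word_def\<close>)
next
  fix n
  have "{q. \<exists>g. word_concat w v q = Some (n, g)} \<subseteq>
    (\<lambda>q. squash q - 1) ` {q. \<exists>g. w q = Some (n, g)} \<union>
    (\<lambda>q. squash q + 1) ` {q. \<exists>g. v q = Some (n, g)}"
    by (auto elim!: word_concat_SomeE)
  then show "finite {q. \<exists>g. word_concat w v q = Some (n, g)}"
    by (rule finite_subset) (use w v in \<open>auto simp: is_word_def\<close>)
qed

section \<open>Restrictions of words\<close>

lemma sorted_list_of_set_eqI: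
  "finite A \<Longrightarrow> sorted_wrt (<) xs \<Longrightarrow> set xs = A \<Longrightarrow> sorted_list_of_set A = xs"
  by (metis strict_sorted_equal strict_sorted_list_of_set set_sorted_list_of_set)

lemma sorted_list_of_set_image_strict_mono_on:
  assumes "finite A" "strict_mono_on A f"
  shows "sorted_list_of_set (f ` A) = map f (sorted_list_of_set A)"
proof (rule sorted_list_of_set_eqI)
  have "sorted_wrt (<) (sorted_list_of_set A)" by (rule strict_sorted_list_of_set)
  then show "sorted_wrt (<) (map f (sorted_list_of_set A))"
    unfolding sorted_wrt_map
    by (rule sorted_wrt_mono_rel[rotated]) (use assms in \<open>auto dest: strict_mono_onD\<close>)
qed (use assms in simp_all)

lemma sorted_list_of_set_Un_less:
  assumes "finite A" "finite B" "\<And>a b. a \<in> A \<Longrightarrow> b \<in> B \<Longrightarrow> a < b"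
  shows "sorted_list_of_set (A \<union> B) = sorted_list_of_set A @ sorted_list_of_set B"
  by (rule sorted_list_of_set_eqI) (use assms in \<open>auto simp: sorted_wrt_append\<close>)

lemma sorted_list_of_set_uminus:
  fixes A :: "'b::linordered_ab_group_add set"
  assumes "finite A"
  shows "sorted_list_of_set (uminus ` A) = rev (map uminus (sorted_list_of_set A))"
proof (rule sorted_list_of_set_eqI)
  have "sorted_wrt (<) (sorted_list_of_set A)" by (rule strict_sorted_list_of_set)
  then show "sorted_wrt (<) (rev (map uminus (sorted_list_of_set A)))"
    unfolding sorted_wrt_rev sorted_wrt_map by (rule sorted_wrt_mono_rel[rotated]) auto
qed (use assms in simp_all)

definition restr_support :: "'a word \<Rightarrow> nat \<Rightarrow> rat set" where
  "restr_support w m = {q. \<exists>n g. w q = Some (n, g) \<and> n < m}"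

lemma restr_eq: "restr w m = map (\<lambda>q. the (w q)) (sorted_list_of_set (restr_support w m))"
  by (simp add: restr_def restr_support_def)

lemma finite_restr_support: "is_word G w \<Longrightarrow> finite (restr_support w m)"
proof -
  assume "is_word G w"
  then have "finite (\<Union>n<m. {q. \<exists>g. w q = Some (n, g)})" by (auto simp: is_word_def)
  moreover have "restr_support w m \<subseteq> (\<Union>n<m. {q. \<exists>g. w q = Some (n, g)})"
    by (auto simp: restr_support_def)
  ultimately show ?thesis by (rule finite_subset[rotated])
qed

lemma restr_cong:
  assumes "\<And>p n g. n < m \<Longrightarrow> w p = Some (n, g) \<longleftrightarrow> v p = Some (n, g)"
  shows "restr w m = restr v m"
proof -
  have "restr_support w m = restr_support v m"
    unfolding restr_support_def using assms by blast
  moreover have "w p = v p" if "p \<in> restr_support w m" for p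
    using that assms by (auto simp: restr_support_def)
  ultimately show ?thesis
    unfolding restr_eq by (cases "finite (restr_support w m)") (auto intro!: map_cong)
qed

lemma restr_empty: "restr (\<lambda>_. None) m = []"
  by (simp add: restr_def)

lemma restr_support_word_concat:
  "restr_support (word_concat w v) m =
     (\<lambda>q. squash q - 1) ` restr_support w m \<union> (\<lambda>q. squash q + 1) ` restr_support v m"
  by (auto simp: restr_support_def word_concat_left word_concat_right elim!: word_concat_SomeE)

lemma restr_word_concat:
  assumes "is_word G w" "is_word G v"
  shows "restr (word_concat w v) m = restr w m @ restr v m"
proof -
  have fin: "finite (restr_support w m)" "finite (restr_support v m)"
    using assms by (simp_all add: finite_restr_support)
  have separated: "squash q - 1 < squash q' + 1" for q q'
    using abs_squash_less[of q] abs_squash_less[of q'] by (simp add: abs_less_iff)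
  have mono: "strict_mono_on A (\<lambda>q. squash q + c)" for A c
    using strict_mono_squash by (simp add: strict_mono_on_def strict_mono_def)
  have "sorted_list_of_set (restr_support (word_concat w v) m) =
     map (\<lambda>q. squash q - 1) (sorted_list_of_set (restr_support w m)) @
     map (\<lambda>q. squash q + 1) (sorted_list_of_set (restr_support v m))"
    unfolding restr_support_word_concat
    using separated mono[of _ "-1", simplified] mono[of _ 1]
    by (subst sorted_list_of_set_Un_less) (auto simp: fin sorted_list_of_set_image_strict_mono_on)
  then show ?thesis
    unfolding restr_eq by (simp add: comp_def word_concat_left word_concat_right)
qed

definition word_filter :: "'a word \<Rightarrow> (rat \<Rightarrow> bool) \<Rightarrow> 'a word" where
  "word_filter w P p = (if P p then w p else None)"

lemma is_word_filter:
  assumes "is_word G w"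
  shows "is_word G (word_filter w P)"
proof -
  have "{q. \<exists>g. word_filter w P q = Some (n, g)} \<subseteq> {q. \<exists>g. w q = Some (n, g)}" for n
    by (auto simp: word_filter_def split: if_splits)
  moreover have "finite {q. \<exists>g. w q = Some (n, g)}" for n
    using assms by (simp add: is_word_def)
  ultimately have "finite {q. \<exists>g. word_filter w P q = Some (n, g)}" for n
    by (rule finite_subset)
  moreover have "\<forall>q n g. word_filter w P q = Some (n, g) \<longrightarrow> g \<in> carrier (G n) \<and> g \<noteq> \<one>\<^bsub>G n\<^esub>"
    using assms by (simp add: is_word_def word_filter_def)
  ultimately show ?thesis by (simp add: is_word_def)
qed

lemma restr_word_filter_split:
  assumes "is_word G w" and P: "\<And>x y. P x \<Longrightarrow> \<not> P y \<Longrightarrow> x < y"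
  shows "restr w m = restr (word_filter w P) m @ restr (word_filter w (\<lambda>p. \<not> P p)) m"
proof -
  have fin: "finite (restr_support w m)" using assms(1) by (rule finite_restr_support)
  have part: "map (\<lambda>q. the (w q)) (sorted_list_of_set {p \<in> restr_support w m. Q p}) =
      restr (word_filter w Q) m" for Q
  proof -
    have "restr_support (word_filter w Q) m = {p \<in> restr_support w m. Q p}"
      by (auto simp: restr_support_def word_filter_def)
    then show ?thesis using fin by (auto simp: restr_eq word_filter_def intro!: map_cong)
  qed
  have "sorted_list_of_set ({p \<in> restr_support w m. P p} \<union> {p \<in> restr_support w m. \<not> P p}) =
      sorted_list_of_set {p \<in> restr_support w m. P p} @
      sorted_list_of_set {p \<in> restr_support w m. \<not> P p}"
    by (rule sorted_list_of_set_Un_less) (use fin P in auto)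
  moreover have "{p \<in> restr_support w m. P p} \<union> {p \<in> restr_support w m. \<not> P p} = restr_support w m"
    by auto
  ultimately show ?thesis using part[of P] part[of "\<lambda>p. \<not> P p"] by (simp add: restr_eq[of w])
qed

section \<open>Word equivalence\<close>

lemma equivclp_map:
  assumes "equivclp R x y" "\<And>a b. R a b \<Longrightarrow> R (f a) (f b)"
  shows "equivclp R (f x) (f y)"
  using assms(1) by (induction rule: equivclp_induct) (auto intro: equivclp_into_equivclp assms(2))

lemma fp_step_append_both: "fp_step G xs ys \<Longrightarrow> fp_step G (l @ xs @ r) (l @ ys @ r)"
proof (induction rule: fp_step.induct)
  case (merge a n b xs ys)
  then show ?case using fp_step.merge[of a G n b "l @ xs" "ys @ r"] by simp
next
  case (delete xs n ys)
  show ?case using fp_step.delete[of G "l @ xs" n "ys @ r"] by simp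
qed

lemma fp_eq_append:
  assumes "fp_eq G xs ys" "fp_eq G xs' ys'"
  shows "fp_eq G (xs @ xs') (ys @ ys')"
proof -
  have "equivclp (fp_step G) (xs @ xs') (ys @ xs')"
    by (rule equivclp_map[where f = "\<lambda>zs. zs @ xs'", OF assms(1)[unfolded fp_eq_def]])
       (use fp_step_append_both[of G _ _ "[]" xs'] in simp)
  also have "equivclp (fp_step G) (ys @ xs') (ys @ ys')"
    by (rule equivclp_map[where f = "\<lambda>zs. ys @ zs", OF assms(2)[unfolded fp_eq_def]])
       (use fp_step_append_both[of G _ _ ys "[]"] in simp)
  finally show ?thesis unfolding fp_eq_def .
qed

lemma word_eq_refl: "word_eq G w w"
  by (simp add: word_eq_def fp_eq_def)

lemma word_eq_sym: "word_eq G w v \<Longrightarrow> word_eq G v w"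
  by (simp add: word_eq_def fp_eq_def equivclp_sym)

lemma word_eq_trans: "word_eq G u v \<Longrightarrow> word_eq G v w \<Longrightarrow> word_eq G u w"
  unfolding word_eq_def fp_eq_def by (blast intro: equivclp_trans)

lemma word_eq_restrI: "(\<And>m. restr w m = restr v m) \<Longrightarrow> word_eq G w v"
  by (simp add: word_eq_def fp_eq_def)

lemma word_eq_concat:
  assumes "is_word G w" "is_word G w'" "is_word G v" "is_word G v'"
    and "word_eq G w w'" "word_eq G v v'"
  shows "word_eq G (word_concat w v) (word_concat w' v')"
  using assms by (simp add: word_eq_def restr_word_concat[of G] fp_eq_append)

lemma word_class_self: "is_word G w \<Longrightarrow> w \<in> word_class G w"
  by (simp add: word_class_def word_eq_refl)

lemma word_class_eqI: "word_eq G w v \<Longrightarrow> word_class G w = word_class G v"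
  unfolding word_class_def by (blast intro: word_eq_trans word_eq_sym)

lemma tp_mult_word_class:
  assumes w: "is_word G w" and v: "is_word G v"
  shows "tp_mult G (word_class G w) (word_class G v) = word_class G (word_concat w v)"
proof (intro equalityI subsetI)
  fix u assume "u \<in> tp_mult G (word_class G w) (word_class G v)"
  then obtain x y where u: "is_word G u" "word_eq G u (word_concat x y)"
    and x: "is_word G x" "word_eq G x w" and y: "is_word G y" "word_eq G y v"
    by (auto simp: tp_mult_def word_class_def)
  have "word_eq G (word_concat x y) (word_concat w v)"
    by (rule word_eq_concat) (use x y w v in auto)
  then show "u \<in> word_class G (word_concat w v)"
    using u by (auto simp: word_class_def intro: word_eq_trans)
next
  fix u assume "u \<in> word_class G (word_concat w v)"
  then show "u \<in> tp_mult G (word_class G w) (word_class G v)"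
    using word_class_self[OF w] word_class_self[OF v] by (auto simp: tp_mult_def word_class_def)
qed

section \<open>The topologist's product is a group\<close>

definition letter_inv :: "(nat \<Rightarrow> 'a monoid) \<Rightarrow> 'a letter \<Rightarrow> 'a letter" where
  "letter_inv G x = (fst x, inv\<^bsub>G (fst x)\<^esub> snd x)"

definition word_inv :: "(nat \<Rightarrow> 'a monoid) \<Rightarrow> 'a word \<Rightarrow> 'a word" where
  "word_inv G w q = map_option (letter_inv G) (w (-q))"

lemma is_word_word_inv:
  assumes "\<And>n. group (G n)" and w: "is_word G w"
  shows "is_word G (word_inv G w)"
  unfolding is_word_def
proof (rule conjI; intro allI impI)
  fix q n g assume "word_inv G w q = Some (n, g)"
  then obtain g' where "w (-q) = Some (n, g')" "g = inv\<^bsub>G n\<^esub> g'"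
    by (auto simp: word_inv_def letter_inv_def)
  then show "g \<in> carrier (G n) \<and> g \<noteq> \<one>\<^bsub>G n\<^esub>"
    using w assms(1)[of n] by (auto simp: is_word_def group.inv_eq_1_iff)
next
  fix n
  have "{q. \<exists>g. word_inv G w q = Some (n, g)} \<subseteq> uminus ` {q. \<exists>g. w q = Some (n, g)}"
    by (auto simp: word_inv_def letter_inv_def image_iff intro!: exI[of _ "- _"])
  then show "finite {q. \<exists>g. word_inv G w q = Some (n, g)}"
    by (rule finite_subset) (use w in \<open>simp add: is_word_def\<close>)
qed

lemma restr_word_inv:
  assumes "is_word G w"
  shows "restr (word_inv G w) m = rev (map (letter_inv G) (restr w m))"
proof -
  have fin: "finite (restr_support w m)" using assms by (rule finite_restr_support)
  have "restr_support (word_inv G w) m = uminus ` restr_support w m"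
    by (force simp: restr_support_def word_inv_def letter_inv_def image_iff)
  then have "restr (word_inv G w) m =
      rev (map (\<lambda>q. the (word_inv G w (-q))) (sorted_list_of_set (restr_support w m)))"
    by (simp add: restr_eq sorted_list_of_set_uminus[OF fin] rev_map comp_def)
  also have "map (\<lambda>q. the (word_inv G w (-q))) (sorted_list_of_set (restr_support w m)) =
      map (letter_inv G) (map (\<lambda>q. the (w q)) (sorted_list_of_set (restr_support w m)))"
    using fin by (auto simp: word_inv_def restr_support_def)
  finally show ?thesis by (simp only: restr_eq)
qed

lemma restr_in_carrier:
  assumes "is_word G w" "x \<in> set (restr w m)"
  shows "snd x \<in> carrier (G (fst x))"
  using assms finite_restr_support[OF assms(1)]
  by (auto simp: restr_eq restr_support_def is_word_def)

lemma fp_eq_inverse_cancel: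
  assumes "\<And>n. group (G n)" "\<forall>x\<in>set xs. snd x \<in> carrier (G (fst x))"
  shows "fp_eq G (rev (map (letter_inv G) xs) @ xs) []"
  using assms(2)
proof (induction xs)
  case Nil
  then show ?case by (simp add: fp_eq_def)
next
  case (Cons x xs)
  obtain n g where x: "x = (n, g)" by (cases x)
  have g: "g \<in> carrier (G n)" "inv\<^bsub>G n\<^esub> g \<in> carrier (G n)"
    using Cons.prems x assms(1)[of n] by auto
  let ?R = "rev (map (letter_inv G) xs)"
  have split: "rev (map (letter_inv G) (x # xs)) @ x # xs = ?R @ [(n, inv\<^bsub>G n\<^esub> g), (n, g)] @ xs"
    by (simp add: x letter_inv_def)
  have "fp_step G (?R @ [(n, inv\<^bsub>G n\<^esub> g), (n, g)] @ xs) (?R @ [(n, \<one>\<^bsub>G n\<^esub>)] @ xs)"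
    using fp_step.merge[where G=G and n=n, OF g(2,1), of ?R xs] g assms(1)[of n] by (simp add: group.l_inv)
  moreover have "fp_step G (?R @ [(n, \<one>\<^bsub>G n\<^esub>)] @ xs) (?R @ xs)"
    by (rule fp_step.delete)
  moreover have "fp_eq G (?R @ xs) []" using Cons by simp
  ultimately show ?case
    unfolding split fp_eq_def by (meson equivclp_trans r_into_equivclp)
qed

lemma carrier_topologists_product:
  "carrier (topologists_product G) = {word_class G w | w. is_word G w}"
  by (simp add: topologists_product_def)

lemma one_topologists_product: "\<one>\<^bsub>topologists_product G\<^esub> = word_class G (\<lambda>_. None)"
  by (simp add: topologists_product_def)

lemma mult_topologists_product:
  "is_word G w \<Longrightarrow> is_word G v \<Longrightarrow>
     word_class G w \<otimes>\<^bsub>topologists_product G\<^esub> word_class G v = word_class G (word_concat w v)"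
  by (simp add: topologists_product_def tp_mult_word_class)

lemma topologists_productE:
  assumes "x \<in> carrier (topologists_product G)"
  obtains w where "is_word G w" "x = word_class G w"
  using assms by (auto simp: carrier_topologists_product)

lemma word_class_in_topologists_product:
  "is_word G w \<Longrightarrow> word_class G w \<in> carrier (topologists_product G)"
  by (auto simp: carrier_topologists_product)

lemma group_topologists_product:
  assumes groups: "\<And>n. group (G n)"
  shows "group (topologists_product G)"
proof (rule groupI)
  fix x y assume "x \<in> carrier (topologists_product G)" "y \<in> carrier (topologists_product G)"
  then show "x \<otimes>\<^bsub>topologists_product G\<^esub> y \<in> carrier (topologists_product G)"
    by (auto elim!: topologists_productE
        simp: mult_topologists_product is_word_concat word_class_in_topologists_product)
next
  show "\<one>\<^bsub>topologists_product G\<^esub> \<in> carrier (topologists_product G)"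
    by (simp add: one_topologists_product word_class_in_topologists_product is_word_empty)
next
  fix x y z
  assume "x \<in> carrier (topologists_product G)" "y \<in> carrier (topologists_product G)"
    "z \<in> carrier (topologists_product G)"
  then obtain a b c where abc: "is_word G a" "is_word G b" "is_word G c"
    "x = word_class G a" "y = word_class G b" "z = word_class G c"
    by (metis topologists_productE)
  have "word_eq G (word_concat (word_concat a b) c) (word_concat a (word_concat b c))"
    by (rule word_eq_restrI) (simp add: abc is_word_concat restr_word_concat[of G])
  then show "x \<otimes>\<^bsub>topologists_product G\<^esub> y \<otimes>\<^bsub>topologists_product G\<^esub> z =
             x \<otimes>\<^bsub>topologists_product G\<^esub> (y \<otimes>\<^bsub>topologists_product G\<^esub> z)"
    by (simp add: abc mult_topologists_product is_word_concat word_class_eqI)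
next
  fix x assume "x \<in> carrier (topologists_product G)"
  then obtain a where a: "is_word G a" "x = word_class G a" by (rule topologists_productE)
  have "word_eq G (word_concat (\<lambda>_. None) a) a"
    by (rule word_eq_restrI) (simp add: a is_word_empty restr_word_concat[of G] restr_empty)
  then show "\<one>\<^bsub>topologists_product G\<^esub> \<otimes>\<^bsub>topologists_product G\<^esub> x = x"
    by (simp add: a one_topologists_product mult_topologists_product is_word_empty word_class_eqI)
next
  fix x assume "x \<in> carrier (topologists_product G)"
  then obtain a where a: "is_word G a" "x = word_class G a" by (rule topologists_productE)
  have ia: "is_word G (word_inv G a)" by (rule is_word_word_inv[OF groups a(1)])
  have "word_eq G (word_concat (word_inv G a) a) (\<lambda>_. None)"
    unfolding word_eq_def
  proof
    fix m
    have "\<forall>x\<in>set (restr a m). snd x \<in> carrier (G (fst x))"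
      using restr_in_carrier[OF a(1)] by blast
    then show "fp_eq G (restr (word_concat (word_inv G a) a) m) (restr (\<lambda>_. None) m)"
      by (simp add: restr_word_concat[OF ia a(1)] restr_word_inv[OF a(1)] restr_empty
          fp_eq_inverse_cancel[OF groups])
  qed
  then have "word_class G (word_inv G a) \<otimes>\<^bsub>topologists_product G\<^esub> x = \<one>\<^bsub>topologists_product G\<^esub>"
    by (simp add: a ia one_topologists_product mult_topologists_product word_class_eqI)
  then show "\<exists>y\<in>carrier (topologists_product G).
      y \<otimes>\<^bsub>topologists_product G\<^esub> x = \<one>\<^bsub>topologists_product G\<^esub>"
    using word_class_in_topologists_product[OF ia] by blast
qed

lemma free_product_sub_subset: "free_product_sub G \<subseteq> carrier (topologists_product G)"
  by (auto simp: free_product_sub_def carrier_topologists_product)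

lemma (in group) normal_closure_normal:
  assumes "S \<subseteq> carrier G"
  shows "normal_closure G S \<lhd> G"
  unfolding normal_closure_def
proof (rule normal_generateI)
  show "(\<Union>x\<in>carrier G. \<Union>s\<in>S. {x \<otimes> s \<otimes> inv x}) \<subseteq> carrier G" using assms by auto
next
  fix h g assume "h \<in> (\<Union>x\<in>carrier G. \<Union>s\<in>S. {x \<otimes> s \<otimes> inv x})" and g: "g \<in> carrier G"
  then obtain x s where xs: "x \<in> carrier G" "s \<in> S" "h = x \<otimes> s \<otimes> inv x" by blast
  then have "g \<otimes> h \<otimes> inv g = (g \<otimes> x) \<otimes> s \<otimes> inv (g \<otimes> x)"
    using g assms by (auto simp: inv_mult_group m_assoc)
  then show "g \<otimes> h \<otimes> inv g \<in> (\<Union>x\<in>carrier G. \<Union>s\<in>S. {x \<otimes> s \<otimes> inv x})"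
    using g xs by blast
qed

lemma (in group) subset_normal_closure:
  assumes "S \<subseteq> carrier G"
  shows "S \<subseteq> normal_closure G S"
proof
  fix s assume "s \<in> S"
  then have "s = \<one> \<otimes> s \<otimes> inv \<one>" using assms by auto
  then show "s \<in> normal_closure G S"
    unfolding normal_closure_def using \<open>s \<in> S\<close> by (blast intro: generate.incl)
qed

section \<open>Nested infinite words\<close>

fun word_power :: "nat \<Rightarrow> 'a word \<Rightarrow> 'a word" where
  "word_power 0 u = (\<lambda>_. None)"
| "word_power (Suc n) u = word_concat u (word_power n u)"

lemma is_word_word_power: "is_word G u \<Longrightarrow> is_word G (word_power n u)"
  by (induction n) (simp_all add: is_word_empty is_word_concat)

lemma restr_word_power:
  "is_word G u \<Longrightarrow> restr (word_power n u) m = concat (replicate n (restr u m))"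
  by (induction n) (simp_all add: restr_empty restr_word_concat[of G] is_word_word_power)

lemma word_power_at:
  "(\<exists>q. \<forall>u::'a word. word_power n u p = u q) \<or> (\<forall>u::'a word. word_power n u p = None)"
proof (induction n arbitrary: p)
  case 0
  then show ?case by simp
next
  case (Suc n)
  consider "-2 < p \<and> p < 0" | "\<not> (-2 < p \<and> p < 0)" "0 < p \<and> p < 2"
    | "\<not> (-2 < p \<and> p < 0)" "\<not> (0 < p \<and> p < 2)"
    by blast
  then show ?case
  proof cases
    case 1
    then show ?thesis by (intro disjI1 exI[of _ "squash_inv (p + 1)"]) (simp add: word_concat_def)
  next
    case 2
    then show ?thesis using Suc.IH[of "squash_inv (p - 1)"] by (simp add: word_concat_def)
  next
    case 3
    then show ?thesis by (auto simp: word_concat_def)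
  qed
qed

definition letters_from :: "nat \<Rightarrow> 'a word \<Rightarrow> bool" where
  "letters_from k w \<longleftrightarrow> (\<forall>p n g. w p = Some (n, g) \<longrightarrow> k \<le> n)"

lemma letters_from_concat:
  "letters_from k w \<Longrightarrow> letters_from k v \<Longrightarrow> letters_from k (word_concat w v)"
  unfolding letters_from_def by (blast elim: word_concat_SomeE)

lemma letters_from_empty: "letters_from k (\<lambda>_. None)"
  by (simp add: letters_from_def)

lemma letters_from_Suc: "letters_from (Suc k) w \<Longrightarrow> letters_from k w"
  unfolding letters_from_def by (meson Suc_leD)

lemma letters_from_word_power: "letters_from k u \<Longrightarrow> letters_from k (word_power n u)"
  by (induction n) (simp_all add: letters_from_concat letters_from_empty)

definition nest_step :: "(nat \<Rightarrow> 'a word) \<Rightarrow> nat \<Rightarrow> nat \<Rightarrow> 'a word \<Rightarrow> 'a word" where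
  "nest_step W B k u = word_concat (W k) (word_power B u)"

fun nest_approx :: "(nat \<Rightarrow> 'a word) \<Rightarrow> nat \<Rightarrow> nat \<Rightarrow> nat \<Rightarrow> 'a word" where
  "nest_approx W B 0 k = (\<lambda>_. None)"
| "nest_approx W B (Suc j) k = nest_step W B k (nest_approx W B j (Suc k))"

text \<open>The infinite word W k (W (k + 1) (W (k + 2) \<dots>)^B)^B, as the letterwise limit of the
  approximations. At a position where no approximation has a letter, SOME picks an arbitrary j,
  which yields None as it should.\<close>

definition nest_word :: "(nat \<Rightarrow> 'a word) \<Rightarrow> nat \<Rightarrow> nat \<Rightarrow> 'a word" where
  "nest_word W B k p = nest_approx W B (SOME j. nest_approx W B j k p \<noteq> None) k p"

lemma nest_step_at:
  "(\<exists>q. \<forall>u::'a word. nest_step W B k u p = u q) \<or>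
   (\<forall>u u'::'a word. nest_step W B k u p = nest_step W B k u' p)"
proof (cases "0 < p \<and> p < 2")
  case True
  then have "nest_step W B k u p = word_power B u (squash_inv (p - 1))" for u :: "'a word"
    by (simp add: nest_step_def word_concat_def)
  then show ?thesis using word_power_at[of B "squash_inv (p - 1)"] by auto
next
  case False
  then show ?thesis by (auto simp: nest_step_def word_concat_def)
qed

lemma nest_approx_Suc: "nest_approx W B j k p = Some x \<Longrightarrow> nest_approx W B (Suc j) k p = Some x"
proof (induction j arbitrary: k p)
  case 0
  then show ?case by simp
next
  case (Suc j)
  from nest_step_at[of W B k p] show ?case
  proof
    assume "\<exists>q. \<forall>u::'a word. nest_step W B k u p = u q"
    then obtain q where "\<And>u::'a word. nest_step W B k u p = u q" by blast
    then show ?thesis using Suc by simp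
  next
    assume "\<forall>u u'::'a word. nest_step W B k u p = nest_step W B k u' p"
    then show ?thesis using Suc.prems by (metis nest_approx.simps(2))
  qed
qed

lemma nest_approx_mono:
  "j \<le> j' \<Longrightarrow> nest_approx W B j k p = Some x \<Longrightarrow> nest_approx W B j' k p = Some x"
  by (induction j' rule: dec_induct) (simp_all del: nest_approx.simps(2) add: nest_approx_Suc)

lemma letters_from_nest_approx:
  assumes "\<And>k. letters_from k (W k)"
  shows "letters_from k (nest_approx W B j k)"
proof (induction j arbitrary: k)
  case 0
  then show ?case by (simp add: letters_from_empty)
next
  case (Suc j)
  have "letters_from k (nest_approx W B j (Suc k))"
    using Suc.IH[of "Suc k"] by (rule letters_from_Suc)
  then show ?case
    by (simp add: nest_step_def assms letters_from_concat letters_from_word_power)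
qed

lemma nest_approx_low:
  assumes "\<And>k. letters_from k (W k)"
  shows "nest_approx W B j k p = Some (n, g) \<Longrightarrow> n < k + i \<Longrightarrow> nest_approx W B i k p = Some (n, g)"
proof (induction i arbitrary: j k p)
  case 0
  have "letters_from k (nest_approx W B j k)" by (rule letters_from_nest_approx[OF assms])
  then have "k \<le> n" using 0(1) unfolding letters_from_def by blast
  with 0(2) show ?case by simp
next
  case (Suc i)
  then obtain j' where j: "j = Suc j'" by (cases j) auto
  from nest_step_at[of W B k p] show ?case
  proof
    assume "\<exists>q. \<forall>u::'a word. nest_step W B k u p = u q"
    then obtain q where q: "\<And>u::'a word. nest_step W B k u p = u q" by blast
    have "nest_approx W B i (Suc k) q = Some (n, g)"
      by (rule Suc.IH[of j']) (use Suc.prems j q in simp_all)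
    then show ?thesis using q by simp
  next
    assume "\<forall>u u'::'a word. nest_step W B k u p = nest_step W B k u' p"
    then show ?thesis using Suc.prems j by (metis nest_approx.simps(2))
  qed
qed

lemma nest_word_Some_iff:
  "nest_word W B k p = Some x \<longleftrightarrow> (\<exists>j. nest_approx W B j k p = Some x)"
proof
  assume "\<exists>j. nest_approx W B j k p = Some x"
  then obtain j where j: "nest_approx W B j k p = Some x" by blast
  define j' where "j' = (SOME j. nest_approx W B j k p \<noteq> None)"
  have "nest_approx W B j' k p \<noteq> None"
    unfolding j'_def by (rule someI[of _ j]) (simp add: j)
  then obtain y where y: "nest_approx W B j' k p = Some y" by blast
  have "y = x"
    using nest_approx_mono[of j j' W B k p x] nest_approx_mono[of j' j W B k p y] j y
    by (cases "j \<le> j'") auto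
  with y have "nest_approx W B j' k p = Some x" by simp
  then show "nest_word W B k p = Some x" by (simp add: nest_word_def j'_def)
qed (auto simp: nest_word_def)

lemma restr_nest_word:
  assumes "\<And>k. letters_from k (W k)" and "m \<le> k + i"
  shows "restr (nest_word W B k) m = restr (nest_approx W B i k) m"
proof (rule restr_cong)
  fix p n g assume "n < m"
  show "nest_word W B k p = Some (n, g) \<longleftrightarrow> nest_approx W B i k p = Some (n, g)"
  proof
    assume "nest_word W B k p = Some (n, g)"
    then obtain j where "nest_approx W B j k p = Some (n, g)" unfolding nest_word_Some_iff ..
    then show "nest_approx W B i k p = Some (n, g)"
      by (rule nest_approx_low[OF assms(1)]) (use \<open>n < m\<close> assms(2) in simp)
  qed (unfold nest_word_Some_iff, blast)
qed

lemma is_word_nest_approx: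
  "(\<And>k. is_word G (W k)) \<Longrightarrow> is_word G (nest_approx W B j k)"
  by (induction j arbitrary: k) (simp_all add: is_word_empty is_word_concat is_word_word_power nest_step_def)

lemma is_word_nest_word:
  assumes words: "\<And>k. is_word G (W k)" and letters: "\<And>k. letters_from k (W k)"
  shows "is_word G (nest_word W B k)"
  unfolding is_word_def
proof (rule conjI; intro allI impI)
  fix q n g assume "nest_word W B k q = Some (n, g)"
  then obtain j where "nest_approx W B j k q = Some (n, g)" by (auto simp: nest_word_Some_iff)
  then show "g \<in> carrier (G n) \<and> g \<noteq> \<one>\<^bsub>G n\<^esub>"
    using is_word_nest_approx[of G W B j k, OF words] by (auto simp: is_word_def)
next
  fix n
  have "{q. \<exists>g. nest_word W B k q = Some (n, g)} \<subseteq> {q. \<exists>g. nest_approx W B (Suc n) k q = Some (n, g)}"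
  proof safe
    fix q g assume "nest_word W B k q = Some (n, g)"
    then obtain j where "nest_approx W B j k q = Some (n, g)" unfolding nest_word_Some_iff ..
    then have "nest_approx W B (Suc n) k q = Some (n, g)" by (rule nest_approx_low[OF letters]) simp
    then show "\<exists>g. nest_approx W B (Suc n) k q = Some (n, g)" by blast
  qed
  then show "finite {q. \<exists>g. nest_word W B k q = Some (n, g)}"
    by (rule finite_subset)
       (use is_word_nest_approx[of G W B "Suc n" k, OF words] in \<open>simp add: is_word_def\<close>)
qed

lemma nest_word_unfold:
  assumes words: "\<And>k. is_word G (W k)" and letters: "\<And>k. letters_from k (W k)"
  shows "word_eq G (nest_word W B k) (nest_step W B k (nest_word W B (Suc k)))"
proof (rule word_eq_restrI)
  fix m
  have next_word: "is_word G (nest_word W B (Suc k))" by (rule is_word_nest_word[OF words letters])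
  have "restr (nest_word W B k) m = restr (nest_approx W B (Suc m) k) m"
    by (rule restr_nest_word[OF letters]) simp
  also have "\<dots> = restr (W k) m @ concat (replicate B (restr (nest_approx W B m (Suc k)) m))"
    using words is_word_nest_approx[of G W B m "Suc k", OF words]
    by (simp add: nest_step_def restr_word_concat[of G] is_word_word_power restr_word_power)
  also have "restr (nest_approx W B m (Suc k)) m = restr (nest_word W B (Suc k)) m"
    by (rule restr_nest_word[OF letters, symmetric]) simp
  also have "restr (W k) m @ concat (replicate B (restr (nest_word W B (Suc k)) m)) =
      restr (nest_step W B k (nest_word W B (Suc k))) m"
    using words next_word
    by (simp add: nest_step_def restr_word_concat[of G] is_word_word_power restr_word_power)
  finally show "restr (nest_word W B k) m = restr (nest_step W B k (nest_word W B (Suc k))) m" .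
qed

section \<open>Homomorphisms to the integers vanishing on the free product\<close>

lemma int_recurrence_imp_zero:
  fixes u :: "nat \<Rightarrow> int"
  assumes rec: "\<And>k. u k = c + b * u (Suc k)" and b: "\<bar>c\<bar> + 1 < b"
  shows "c = 0"
proof -
  \<comment> \<open>The shift v turns the recurrence into v k = b * v (k + 1), so b ^ k divides v 0 for all k.\<close>
  define v where "v k = (b - 1) * u k + c" for k
  have v_pow: "v 0 = b ^ k * v k" for k
  proof (induction k)
    case (Suc k)
    have "v k = b * v (Suc k)" unfolding v_def by (subst rec) (simp add: algebra_simps)
    then show ?case using Suc by simp
  qed simp
  have "v 0 = 0"
  proof (rule ccontr)
    assume "v 0 \<noteq> 0"
    define k where "k = nat \<bar>v 0\<bar>"
    have "v k \<noteq> 0" using \<open>v 0 \<noteq> 0\<close> v_pow[of k] by auto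
    then have "b ^ k \<le> \<bar>v 0\<bar>" using v_pow[of k] b by (simp add: abs_mult)
    moreover have "(2::int) ^ k \<le> b ^ k" using b by (simp add: power_mono)
    moreover have "int k < 2 ^ k" using less_exp[of k] by (simp add: of_nat_less_iff[symmetric])
    ultimately show False unfolding k_def by linarith
  qed
  then have "(b - 1) * u 0 = - c" by (simp add: v_def)
  moreover have "u 0 = 0"
  proof (rule ccontr)
    assume "u 0 \<noteq> 0"
    then have "1 \<le> \<bar>u 0\<bar>" by simp
    then have "b - 1 \<le> (b - 1) * \<bar>u 0\<bar>" using b by (simp add: mult_le_cancel_left1)
    also have "\<dots> = \<bar>(b - 1) * u 0\<bar>" using b by (simp add: abs_mult)
    also have "\<dots> = \<bar>c\<bar>" using \<open>(b - 1) * u 0 = - c\<close> by simp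
    finally show False using b by simp
  qed
  ultimately show ?thesis by simp
qed

locale hom_vanishing_on_free_product =
  fixes G :: "nat \<Rightarrow> 'a monoid" and f :: "'a word set \<Rightarrow> int"
  assumes groups: "\<And>n. group (G n)"
    and hom: "f \<in> hom (topologists_product G) integer_group"
    and vanishes: "\<And>x. x \<in> free_product_sub G \<Longrightarrow> f x = 0"
begin

abbreviation F :: "'a word \<Rightarrow> int" where
  "F w \<equiv> f (word_class G w)"

lemma F_concat: "is_word G w \<Longrightarrow> is_word G v \<Longrightarrow> F (word_concat w v) = F w + F v"
  using hom_mult[OF hom, of "word_class G w" "word_class G v"]
  by (simp add: mult_topologists_product word_class_in_topologists_product)

lemma F_empty: "F (\<lambda>_. None) = 0"
  using hom_one[OF hom group_topologists_product[OF groups] group_integer_group]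
  by (simp add: one_topologists_product)

lemma F_word_power: "is_word G u \<Longrightarrow> F (word_power n u) = int n * F u"
  by (induction n) (simp_all add: F_empty F_concat is_word_word_power algebra_simps)

lemma F_finite_dom: "is_word G w \<Longrightarrow> finite (dom w) \<Longrightarrow> F w = 0"
  by (rule vanishes) (auto simp: free_product_sub_def)

lemma F_filter_split:
  assumes "is_word G w" "\<And>x y. P x \<Longrightarrow> \<not> P y \<Longrightarrow> x < y"
  shows "F w = F (word_filter w P) + F (word_filter w (\<lambda>p. \<not> P p))"
proof -
  have "word_eq G w (word_concat (word_filter w P) (word_filter w (\<lambda>p. \<not> P p)))"
    by (rule word_eq_restrI)
       (simp add: restr_word_filter_split[OF assms] restr_word_concat[of G] is_word_filter assms(1))
  then show ?thesis by (metis word_class_eqI F_concat is_word_filter assms(1))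
qed

lemma F_around_point:
  assumes "is_word G w"
  shows "F w = F (word_filter w (\<lambda>p. p < q)) + F (word_filter w (\<lambda>p. q < p))"
proof -
  let ?right = "word_filter w (\<lambda>p. \<not> p < q)"
  have "F w = F (word_filter w (\<lambda>p. p < q)) + F ?right"
    by (rule F_filter_split[OF assms]) auto
  also have "F ?right = F (word_filter ?right (\<lambda>p. p \<le> q)) + F (word_filter ?right (\<lambda>p. \<not> p \<le> q))"
    by (rule F_filter_split) (auto simp: is_word_filter assms)
  also have "F (word_filter ?right (\<lambda>p. p \<le> q)) = 0"
  proof (rule F_finite_dom)
    have "dom (word_filter ?right (\<lambda>p. p \<le> q)) \<subseteq> {q}"
      by (auto simp: word_filter_def split: if_splits)
    then show "finite (dom (word_filter ?right (\<lambda>p. p \<le> q)))" by (rule finite_subset) simp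
  qed (simp add: is_word_filter assms)
  also have "word_filter ?right (\<lambda>p. \<not> p \<le> q) = word_filter w (\<lambda>p. q < p)"
    by (auto simp: word_filter_def)
  finally show ?thesis by simp
qed

lemma F_delete_letter:
  assumes "is_word G w"
  shows "F (w(q := None)) = F w"
proof -
  have "w(q := None) = word_filter w (\<lambda>p. p \<noteq> q)" by (auto simp: word_filter_def)
  then have "is_word G (w(q := None))" using is_word_filter[OF assms] by simp
  moreover have "word_filter (w(q := None)) (\<lambda>p. p < q) = word_filter w (\<lambda>p. p < q)"
    "word_filter (w(q := None)) (\<lambda>p. q < p) = word_filter w (\<lambda>p. q < p)"
    by (auto simp: word_filter_def)
  ultimately show ?thesis using F_around_point[OF assms, of q] F_around_point[of "w(q := None)" q] by simp
qed

lemma F_delete_finite: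
  assumes "is_word G w" "finite D"
  shows "F (word_filter w (\<lambda>p. p \<notin> D)) = F w"
  using assms(2)
proof (induction rule: finite_induct)
  case empty
  have "word_filter w (\<lambda>p. p \<notin> {}) = w" by (rule ext) (simp add: word_filter_def)
  then show ?case by simp
next
  case (insert q D)
  have "word_filter w (\<lambda>p. p \<notin> insert q D) = (word_filter w (\<lambda>p. p \<notin> D))(q := None)"
    by (auto simp: word_filter_def)
  then show ?case
    by (simp only: F_delete_letter[OF is_word_filter[OF assms(1)]] insert.IH)
qed

lemma F_vanishes:
  assumes w: "is_word G w"
  shows "F w = 0"
proof -
  define W where "W k = word_filter w (\<lambda>p. p \<notin> restr_support w k)" for k
  define B where "B = nat \<bar>F w\<bar> + 2"
  have W: "is_word G (W k)" "letters_from k (W k)" "F (W k) = F w" for k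
    using is_word_filter[OF w] F_delete_finite[OF w finite_restr_support[OF w]]
    by (auto simp: W_def letters_from_def word_filter_def restr_support_def not_less)
  have recurrence: "F (nest_word W B k) = F w + int B * F (nest_word W B (Suc k))" for k
  proof -
    have "F (nest_word W B k) = F (nest_step W B k (nest_word W B (Suc k)))"
      using word_class_eqI[OF nest_word_unfold[OF W(1,2)]] by simp
    also have "\<dots> = F w + int B * F (nest_word W B (Suc k))"
      using is_word_nest_word[OF W(1,2)]
      by (simp add: nest_step_def F_concat F_word_power W is_word_word_power)
    finally show ?thesis .
  qed
  show ?thesis
    by (rule int_recurrence_imp_zero[of "\<lambda>k. F (nest_word W B k)", OF recurrence]) (simp add: B_def)
qed

end

lemma hom_archipelago_integer_group_trivial:
  fixes G :: "nat \<Rightarrow> 'a monoid"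
  assumes groups: "\<And>n. group (G n)"
    and h: "h \<in> hom (archipelago G) integer_group" and a: "a \<in> carrier (archipelago G)"
  shows "h a = 0"
proof -
  let ?T = "topologists_product G"
  let ?N = "normal_closure ?T (free_product_sub G)"
  interpret T: group ?T by (rule group_topologists_product[OF groups])
  interpret N: normal ?N ?T by (rule T.normal_closure_normal[OF free_product_sub_subset])
  have A: "archipelago G = ?T Mod ?N" by (simp add: archipelago_def)
  define f where "f = h \<circ> (\<lambda>a. ?N #>\<^bsub>?T\<^esub> a)"
  interpret hom_vanishing_on_free_product G f
  proof (rule hom_vanishing_on_free_product.intro[OF groups])
    show "f \<in> hom ?T integer_group"
      unfolding f_def using h A by (auto intro: hom_compose[OF N.r_coset_hom_Mod])
    fix x assume "x \<in> free_product_sub G"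
    then have "x \<in> ?N" using T.subset_normal_closure[OF free_product_sub_subset] by blast
    then have "?N #>\<^bsub>?T\<^esub> x = \<one>\<^bsub>archipelago G\<^esub>"
      by (simp add: A N.rcos_const[OF T.is_group] FactGroup_def)
    moreover have "h \<one>\<^bsub>archipelago G\<^esub> = 0"
      using hom_one[OF h] N.factorgroup_is_group A by simp
    ultimately show "f x = 0" by (simp add: f_def)
  qed
  obtain x where x: "x \<in> carrier ?T" "a = ?N #>\<^bsub>?T\<^esub> x"
    using a unfolding A by (auto simp: FactGroup_def RCOSETS_def)
  obtain w where "is_word G w" "x = word_class G w" using x(1) by (rule topologists_productE)
  then show ?thesis using F_vanishes x(2) by (simp add: f_def)
qed

lemma not_Mod_iso_integer_group:
  assumes trivial: "\<forall>h \<in> hom H integer_group. \<forall>x \<in> carrier H. h x = 0" and N: "N \<lhd> H"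
  shows "\<not> H Mod N \<cong> integer_group"
proof
  assume "H Mod N \<cong> integer_group"
  then obtain \<phi> where \<phi>: "\<phi> \<in> iso (H Mod N) integer_group" by (auto simp: is_iso_def)
  then have "1 \<in> \<phi> ` carrier (H Mod N)" by (simp add: iso_def bij_betw_def)
  then obtain Y where "Y \<in> carrier (H Mod N)" "\<phi> Y = 1" by (metis imageE)
  then obtain x where "x \<in> carrier H" "\<phi> (N #>\<^bsub>H\<^esub> x) = 1"
    by (auto simp: FactGroup_def RCOSETS_def)
  moreover have "\<phi> \<circ> (\<lambda>a. N #>\<^bsub>H\<^esub> a) \<in> hom H integer_group"
    using \<phi> by (auto intro: hom_compose[OF normal.r_coset_hom_Mod[OF N]] simp: iso_def)
  ultimately show False using trivial by fastforce
qed

theorem proposition7: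
  fixes G :: "nat \<Rightarrow> 'a monoid"
  assumes "\<And>n. group (G n)"
  shows "\<not> (\<exists>N. N \<lhd> archipelago G \<and> archipelago G Mod N \<cong> integer_group) \<and>
         (\<forall>h \<in> hom (archipelago G) integer_group. \<forall>x \<in> carrier (archipelago G). h x = 0)"
proof -
  have trivial: "\<forall>h \<in> hom (archipelago G) integer_group. \<forall>x \<in> carrier (archipelago G). h x = 0"
    by (intro ballI) (rule hom_archipelago_integer_group_trivial[OF assms])
  moreover have "\<not> (\<exists>N. N \<lhd> archipelago G \<and> archipelago G Mod N \<cong> integer_group)"
  proof
    assume "\<exists>N. N \<lhd> archipelago G \<and> archipelago G Mod N \<cong> integer_group"
    then obtain N where "N \<lhd> archipelago G" "archipelago G Mod N \<cong> integer_group" by auto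
    with not_Mod_iso_integer_group[OF trivial] show False by simp
  qed
  ultimately show ?thesis by (rule conjI[rotated])
qed

end
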